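(* Let $K$ be a number field and let $A=A_1\cdots A_n$ with $A_1,\ldots,A_n\in M_d(K)$. Suppose there exists $r\ge0$ such that $\operatorname{rank}(A)=\operatorname{rank}(A_iA_{i+1})=r$ for all $i\in[1,n-1]$. (1) There exists a subproduct $A'\coloneqq A_{i_1}\cdots A_{i_k}$ with $1=i_1<i_2<\cdots<i_{k-1}<i_k=n$ such that $A\parallel A'$ and $k\le\binom{d}{r}+3$. (2) If $n\ge 2\binom{d}{r}+4$, then there are $1\le k<l\le n$ such that $A_k\cdots A_l$ is completely pseudo-regular of rank $r$.
   Context: For $A,B\in M_d(K)$, write $A\parallel B$ if $\operatorname{im}(A)=\operatorname{im}(B)$ and $\ker(A)=\ker(B)$. A matrix is completely pseudo-regular if it is contained in a subgroup of the multiplicative semigroup $M_d(K)$; equivalently, $\operatorname{im}(C)\cap\ker(C)=0$. *)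

theory Defs
  imports "HOL-Analysis.Analysis"
begin

text \<open>A number field, realised (via a complex embedding) as a subfield K of the
complex numbers that is finite-dimensional as a vector space over the rationals.\<close>
definition number_field :: "complex set \<Rightarrow> bool" where
  "number_field K \<longleftrightarrow>
     0 \<in> K \<and> 1 \<in> K \<and>
     (\<forall>x\<in>K. \<forall>y\<in>K. x + y \<in> K \<and> x * y \<in> K \<and> - x \<in> K) \<and>
     (\<forall>x\<in>K. x \<noteq> 0 \<longrightarrow> inverse x \<in> K) \<and>
     (\<exists>B. finite B \<and> B \<subseteq> K \<and>
        (\<forall>x\<in>K. \<exists>c. (\<forall>b\<in>B. c b \<in> \<rat>) \<and> x = (\<Sum>b\<in>B. c b * b)))"

definition mat_over :: "complex set \<Rightarrow> complex^'d^'d \<Rightarrow> bool" where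
  "mat_over K M \<longleftrightarrow> (\<forall>i j. M $ i $ j \<in> K)"

definition mat_im :: "'a::field^'d^'d \<Rightarrow> ('a^'d) set" where
  "mat_im M = range (\<lambda>x. M *v x)"

definition mat_ker :: "'a::field^'d^'d \<Rightarrow> ('a^'d) set" where
  "mat_ker M = {x. M *v x = 0}"

definition par :: "'a::field^'d^'d \<Rightarrow> 'a^'d^'d \<Rightarrow> bool" (infix "\<parallel>" 50) where
  "A \<parallel> B \<longleftrightarrow> mat_im A = mat_im B \<and> mat_ker A = mat_ker B"

text \<open>C is contained in a subgroup of the multiplicative semigroup M_d(K):
a set G of matrices over K, closed under multiplication, with an identity
element e of G and inverses (w.r.t. e) inside G.\<close>
definition completely_pseudo_regular ::
  "complex set \<Rightarrow> complex^'d^'d \<Rightarrow> bool" where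
  "completely_pseudo_regular K C \<longleftrightarrow>
     (\<exists>G e. (\<forall>M\<in>G. mat_over K M) \<and> C \<in> G \<and> e \<in> G \<and>
        (\<forall>x\<in>G. \<forall>y\<in>G. x ** y \<in> G) \<and>
        (\<forall>x\<in>G. e ** x = x \<and> x ** e = x) \<and>
        (\<forall>x\<in>G. \<exists>y\<in>G. x ** y = e \<and> y ** x = e))"

definition list_prod :: "(nat \<Rightarrow> 'a::semiring_1^'d^'d) \<Rightarrow> nat list \<Rightarrow> 'a^'d^'d" where
  "list_prod A is = foldr (\<lambda>i M. A i ** M) is (mat 1)"

text \<open>Ordered product A_i A_{i+1} ... A_j (identity if j < i).\<close>
definition mprod :: "(nat \<Rightarrow> 'a::semiring_1^'d^'d) \<Rightarrow> nat \<Rightarrow> nat \<Rightarrow> 'a^'d^'d" where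
  "mprod A i j = list_prod A [i..<Suc j]"

end

theory Submission
  imports Defs
begin

text \<open>
  If A = A_1 ... A_n has the same rank r as every A_i A_(i+1), then every subproduct
  A_k ... A_l (k < l) has rank r, image im(A_k A_(k+1)) and kernel ker(A_(l-1) A_l); and a
  product XY keeps the rank of Y exactly when im Y \<inter> ker X = 0.  Both parts then follow
  from a skew Bollobas-type bound for subspaces: if dim U_a = r, dim W_a = d - r,
  U_a \<inter> W_a = 0 and U_b \<inter> W_a \<noteq> 0 for a < b, then there are at most (d choose r)
  indices.  Indeed the matrix of determinants det[W_a; U_b] is triangular with nonzero
  diagonal, while the Laplace expansion along the rows spanning W_a writes it as a sum of
  (d choose r) products.

  For (1) the bound is applied to a shortest rank-preserving subproduct
  (A_1 A_2) B_1 ... B_s (A_(n-1) A_n), cut at every position: dropping any nonempty block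
  B_(a+1) ... B_b loses rank.  For (2) it is applied to the pairs A_(2i-1) A_(2i): if no
  subproduct C had im C \<inter> ker C = 0, there would be (d choose r) + 1 admissible
  indices.  Finally such a C satisfies a nontrivial K-linear relation among its powers,
  which yields a group inverse of C that is a polynomial in C over K.
\<close>

section \<open>Image, kernel and rank over an arbitrary field\<close>

lemma dim_image_add_dim_kernel:
  fixes X :: "'a::field^'n^'n"
  assumes S: "vec.subspace S"
  shows "vec.dim ((*v) X ` S) + vec.dim (S \<inter> {x. X *v x = 0}) = vec.dim S"
proof -
  let ?Z = "S \<inter> {x. X *v x = 0}"
  have Z: "vec.subspace ?Z"
    using S by (intro vec.subspace_inter)
      (auto simp: vec.subspace_def matrix_vector_right_distrib vector_scalar_commute)
  obtain B0 where B0: "B0 \<subseteq> ?Z" "vec.independent B0" "?Z \<subseteq> vec.span B0" "card B0 = vec.dim ?Z"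
    using vec.basis_exists by blast
  obtain B where B: "B0 \<subseteq> B" "B \<subseteq> S" "vec.independent B" "S \<subseteq> vec.span B"
    using vec.maximal_independent_subset_extend[of B0 S] B0 by blast
  define C where "C = B - B0"
  have "finite B" using B(3) vec.independent_bound_general by blast
  have span_B: "vec.span B = S" using B S vec.span_minimal vec.span_superset by blast
  have card_B: "card B = vec.dim S" using B vec.basis_card_eq_dim by blast
  have card_C: "card C = card B - card B0"
    unfolding C_def using \<open>finite B\<close> B(1) card_Diff_subset finite_subset by blast
  have B0_le: "card B0 \<le> card B" using \<open>finite B\<close> B(1) card_mono by blast
  have "vec.independent C" unfolding C_def using B(3) vec.independent_mono by blast
  then have dim_C: "vec.dim (vec.span C) = card C" by (rule vec.dim_span_eq_card_independent)
  have sums: "{x + y |x y. x \<in> vec.span C \<and> y \<in> ?Z} = S"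
  proof -
    have "vec.span B0 = ?Z" using B0 Z vec.span_minimal vec.span_superset by blast
    moreover have "B = C \<union> B0" unfolding C_def using B(1) by blast
    ultimately show ?thesis using span_B vec.span_Un[of C B0] by simp
  qed
  \<comment> \<open>counting dimensions in S = span C + Z shows that span C is a complement of Z\<close>
  have "vec.dim S + vec.dim (vec.span C \<inter> ?Z) = card C + vec.dim ?Z"
    using vec.dim_sums_Int[OF vec.subspace_span Z, of C] by (simp only: sums dim_C)
  then have "vec.dim (vec.span C \<inter> ?Z) = 0"
    using card_C card_B B0(4) B0_le by linarith
  then have C_Z: "vec.span C \<inter> ?Z \<subseteq> {0}"
    by (simp only: vec.dim_eq_0)
  have C_S: "vec.span C \<subseteq> S"
    using span_B C_def vec.span_mono by (metis Diff_subset)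
  have inj: "inj_on ((*v) X) (vec.span C)"
    unfolding vec.inj_on_iff_eq_0[OF vec.subspace_span] using C_Z C_S by blast
  have "(*v) X ` S = (*v) X ` vec.span C"
  proof
    show "(*v) X ` vec.span C \<subseteq> (*v) X ` S" using C_S by (rule image_mono)
    show "(*v) X ` S \<subseteq> (*v) X ` vec.span C"
    proof
      fix y assume "y \<in> (*v) X ` S"
      then obtain x where "x \<in> S" "y = X *v x" by blast
      moreover obtain a b where "x = a + b" "a \<in> vec.span C" "b \<in> ?Z"
        using sums \<open>x \<in> S\<close> by blast
      ultimately show "y \<in> (*v) X ` vec.span C" by (simp add: matrix_vector_right_distrib)
    qed
  qed
  then have "vec.dim ((*v) X ` S) = card C"
    using vec.dim_image_eq[OF matrix_vector_mul_linear_gen, of X "vec.span C"] inj dim_C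
    by (simp only: vec.span_span)
  then show ?thesis using card_C card_B B0(4) B0_le by linarith
qed

lemma dim_rows_le_dim_columns_gen:
  fixes A :: "'a::field^'n^'m"
  shows "vec.dim (rows A) \<le> vec.dim (columns A)"
proof -
  obtain B where B: "B \<subseteq> columns A" "vec.independent B" "columns A \<subseteq> vec.span B"
    "card B = vec.dim (columns A)"
    using vec.basis_exists by blast
  have "finite B" using B(2) vec.independent_bound_general by blast
  have "\<forall>j. \<exists>u. column j A = (\<Sum>v\<in>B. u v *s v)"
    using B(3) vec.span_finite[OF \<open>finite B\<close>] unfolding columns_def by blast
  then obtain u where u: "\<And>j. column j A = (\<Sum>v\<in>B. u j v *s v)" by metis
  define \<rho> where "\<rho> v = (\<chi> j. u j v)" for v
  have row: "row i A = (\<Sum>v\<in>B. (v $ i) *s \<rho> v)" for i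
  proof -
    have "row i A $ j = (\<Sum>v\<in>B. (v $ i) *s \<rho> v) $ j" for j
    proof -
      have "row i A $ j = column j A $ i" by (simp add: row_def column_def)
      also have "\<dots> = (\<Sum>v\<in>B. u j v * v $ i)" by (simp add: u sum_component)
      finally show ?thesis by (simp add: sum_component \<rho>_def mult.commute)
    qed
    then show ?thesis by (simp add: vec_eq_iff)
  qed
  have "rows A \<subseteq> vec.span (\<rho> ` B)"
  proof
    fix x assume "x \<in> rows A"
    then obtain i where "x = row i A" unfolding rows_def by blast
    moreover have "row i A \<in> vec.span (\<rho> ` B)" unfolding row
      by (rule vec.span_sum, rule vec.span_scale, rule vec.span_base) auto
    ultimately show "x \<in> vec.span (\<rho> ` B)" by simp
  qed
  then have "vec.dim (rows A) \<le> card (\<rho> ` B)" using vec.dim_le_card \<open>finite B\<close> by blast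
  also have "\<dots> \<le> card B" using \<open>finite B\<close> card_image_le by blast
  finally show ?thesis using B(4) by simp
qed

lemma rank_eq_dim_columns:
  fixes A :: "'a::field^'n^'m"
  shows "rank A = vec.dim (columns A)"
  using dim_rows_le_dim_columns_gen[of A] dim_rows_le_dim_columns_gen[of "transpose A"]
  by (simp add: row_rank_def_gen rows_transpose columns_transpose)

lemma matrix_vector_mult_axis: "(A::'a::field^'n^'m) *v axis j 1 = column j A"
  by (simp add: vec_eq_iff matrix_vector_mult_def column_def axis_def if_distrib cong: if_cong)

lemma range_matrix_vector_mult:
  fixes A :: "'a::field^'n^'m"
  shows "range ((*v) A) = vec.span (columns A)"
proof
  show "range ((*v) A) \<subseteq> vec.span (columns A)"
    using matrix_vector_mult_in_columnspace_gen by blast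
  have "columns A \<subseteq> range ((*v) A)"
    unfolding columns_def by (auto simp: matrix_vector_mult_axis[symmetric])
  then show "vec.span (columns A) \<subseteq> range ((*v) A)"
    by (metis vec.span_minimal vec.subspace_UNIV vec.subspace_image)
qed

lemma rank_eq_dim_mat_im: "rank (A::'a::field^'n^'n) = vec.dim (mat_im A)"
  unfolding mat_im_def range_matrix_vector_mult vec.dim_span rank_eq_dim_columns ..

lemma subspace_mat_im: "vec.subspace (mat_im (X::'a::field^'n^'n))"
  unfolding mat_im_def by (metis vec.subspace_UNIV vec.subspace_image)

lemma subspace_mat_ker: "vec.subspace (mat_ker (X::'a::field^'n^'n))"
  unfolding mat_ker_def vec.subspace_def
  by (simp add: matrix_vector_right_distrib vector_scalar_commute)

lemma zero_in_mat_im_inter_mat_ker: "0 \<in> mat_im (Y::'a::field^'n^'n) \<inter> mat_ker (X::'a^'n^'n)"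
  using vec.subspace_0[OF subspace_mat_im[of Y]] vec.subspace_0[OF subspace_mat_ker[of X]] by simp

lemma mat_im_matrix_mul: "mat_im ((X::'a::field^'n^'n) ** Y) = (*v) X ` mat_im Y"
  unfolding mat_im_def by (auto simp: matrix_vector_mul_assoc[symmetric] image_iff)

lemma mat_im_matrix_mul_subset: "mat_im ((X::'a::field^'n^'n) ** Y) \<subseteq> mat_im X"
  unfolding mat_im_def by (auto simp: matrix_vector_mul_assoc[symmetric])

lemma mat_ker_matrix_mul_subset: "mat_ker (Y::'a::field^'n^'n) \<subseteq> mat_ker (X ** Y)"
  unfolding mat_ker_def by (auto simp: matrix_vector_mul_assoc[symmetric])

lemma rank_matrix_mul_le_right: "rank ((X::'a::field^'n^'n) ** Y) \<le> rank (Y::'a^'n^'n)"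
  using vec.dim_image_le[OF matrix_vector_mul_linear_gen, of X "mat_im Y"]
  by (simp add: rank_eq_dim_mat_im mat_im_matrix_mul)

lemma rank_matrix_mul_le_left: "rank ((X::'a::field^'n^'n) ** (Y::'a^'n^'n)) \<le> rank X"
  using vec.dim_subset[OF mat_im_matrix_mul_subset, of X Y] by (simp add: rank_eq_dim_mat_im)

lemma rank_add_dim_mat_ker: "rank (X::'a::field^'n^'n) + vec.dim (mat_ker X) = CARD('n)"
  using dim_image_add_dim_kernel[OF vec.subspace_UNIV, of X]
  by (simp add: rank_eq_dim_mat_im mat_im_def mat_ker_def card_cart_basis)

lemma rank_le_CARD: "rank (X::'a::field^'n^'n) \<le> CARD('n)"
  using rank_add_dim_mat_ker[of X] by linarith

lemma rank_matrix_mul_eq_right_iff: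
  "rank ((X::'a::field^'n^'n) ** Y) = rank Y \<longleftrightarrow> mat_im Y \<inter> mat_ker X = {0}"
proof -
  have "rank (X ** Y) + vec.dim (mat_im Y \<inter> mat_ker X) = rank Y"
    using dim_image_add_dim_kernel[OF subspace_mat_im, of X Y]
    by (simp add: rank_eq_dim_mat_im mat_im_matrix_mul mat_ker_def)
  then have "rank (X ** Y) = rank Y \<longleftrightarrow> vec.dim (mat_im Y \<inter> mat_ker X) = 0" by linarith
  also have "\<dots> \<longleftrightarrow> mat_im Y \<inter> mat_ker X \<subseteq> {0}" by (rule vec.dim_eq_0)
  also have "\<dots> \<longleftrightarrow> mat_im Y \<inter> mat_ker X = {0}" using zero_in_mat_im_inter_mat_ker[of Y X] by blast
  finally show ?thesis .
qed

lemma mat_im_matrix_mul_eq: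
  assumes "rank ((X::'a::field^'n^'n) ** Y) = rank X"
  shows "mat_im (X ** Y) = mat_im X"
proof (rule vec.subspace_dim_equal[OF subspace_mat_im subspace_mat_im])
  show "mat_im (X ** Y) \<subseteq> mat_im X" by (rule mat_im_matrix_mul_subset)
  show "vec.dim (mat_im X) \<le> vec.dim (mat_im (X ** Y))"
    using assms by (simp only: rank_eq_dim_mat_im order_refl)
qed

lemma mat_ker_matrix_mul_eq:
  assumes "rank ((X::'a::field^'n^'n) ** Y) = rank Y"
  shows "mat_ker (X ** Y) = mat_ker Y"
proof (rule vec.subspace_dim_equal[OF subspace_mat_ker subspace_mat_ker, symmetric])
  show "mat_ker Y \<subseteq> mat_ker (X ** Y)" by (rule mat_ker_matrix_mul_subset)
  show "vec.dim (mat_ker (X ** Y)) \<le> vec.dim (mat_ker Y)"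
    using assms rank_add_dim_mat_ker[of Y] rank_add_dim_mat_ker[of "X ** Y"] by linarith
qed


section \<open>Ordered products\<close>

lemma list_prod_Nil [simp]: "list_prod A [] = mat 1"
  by (simp add: list_prod_def)

lemma list_prod_Cons [simp]: "list_prod A (i # is) = A i ** list_prod A is"
  by (simp add: list_prod_def)

lemma list_prod_append: "list_prod A (is @ js) = list_prod A is ** list_prod A js"
  by (induction "is") (simp_all add: matrix_mul_assoc)

lemma mprod_split:
  assumes "i \<le> Suc k" "k \<le> j"
  shows "mprod A i j = mprod A i k ** mprod A (Suc k) j"
proof -
  have "[i..<Suc j] = [i..<Suc k] @ [Suc k..<Suc j]"
    using assms upt_add_eq_append[of i "Suc k" "j - k"] by simp
  then show ?thesis unfolding mprod_def by (simp add: list_prod_append)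
qed

lemma mprod_Suc_same: "mprod A i (Suc i) = A i ** A (Suc i)"
  by (simp add: mprod_def)

lemma sorted_wrt_take_append_drop:
  assumes "sorted_wrt (<) (xs::nat list)" "a \<le> b"
  shows "sorted_wrt (<) (take a xs @ drop b xs)"
proof -
  have "sorted_wrt (<) (take b xs @ drop b xs)" using assms(1) by simp
  moreover have "set (take a xs) \<subseteq> set (take b xs)" using assms(2) by (rule set_take_subset_set_take)
  ultimately show ?thesis using assms(1) unfolding sorted_wrt_append
    by (auto intro: sorted_wrt_take sorted_wrt_drop)
qed


lemma upt_Suc_eq_ends:
  assumes "n \<ge> 4"
  shows "[1..<Suc n] = [1, 2] @ [3..<n - 1] @ [n - 1, n]"
proof -
  have "[1..<Suc n] = [1..<3] @ [3..<Suc n]"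
    using upt_add_eq_append[of 1 3 "Suc n - 3"] assms by (simp del: upt_Suc)
  also have "[3..<Suc n] = [3..<n - 1] @ [n - 1..<Suc n]"
    using upt_add_eq_append[of 3 "n - 1" 2] assms by (simp del: upt_Suc)
  also have "[1..<3] = [1, 2::nat]" by (simp add: upt_conv_Cons numeral_3_eq_3 del: upt_Suc)
  also have "[n - 1..<Suc n] = [n - 1, n]" using assms by (simp add: upt_conv_Cons del: upt_Suc)
  finally show ?thesis by simp
qed

section \<open>Subfields and linear relations over them\<close>

definition is_subfield :: "'a::field set \<Rightarrow> bool" where
  "is_subfield F \<longleftrightarrow> 0 \<in> F \<and> 1 \<in> F \<and> (\<forall>x\<in>F. \<forall>y\<in>F. x + y \<in> F \<and> x * y \<in> F \<and> - x \<in> F) \<and>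
     (\<forall>x\<in>F. x \<noteq> 0 \<longrightarrow> inverse x \<in> F)"

lemma number_field_imp_is_subfield: "number_field K \<Longrightarrow> is_subfield K"
  unfolding number_field_def is_subfield_def by blast

lemma is_subfield_UNIV: "is_subfield UNIV"
  by (simp add: is_subfield_def)

lemma subfield_mult: "is_subfield F \<Longrightarrow> a \<in> F \<Longrightarrow> b \<in> F \<Longrightarrow> a * b \<in> F"
  unfolding is_subfield_def by blast

lemma subfield_uminus: "is_subfield F \<Longrightarrow> a \<in> F \<Longrightarrow> - a \<in> F"
  unfolding is_subfield_def by blast

lemma subfield_diff: "is_subfield F \<Longrightarrow> a \<in> F \<Longrightarrow> b \<in> F \<Longrightarrow> a - b \<in> F"
  unfolding is_subfield_def diff_conv_add_uminus by blast

lemma subfield_inverse: "is_subfield F \<Longrightarrow> a \<in> F \<Longrightarrow> inverse a \<in> F"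
  unfolding is_subfield_def by (metis inverse_zero)

lemma subfield_sum:
  assumes "is_subfield F" "\<And>i. i \<in> I \<Longrightarrow> g i \<in> F"
  shows "sum g I \<in> F"
proof (cases "finite I")
  case True
  then show ?thesis using assms(2)
    by (induction I rule: finite_induct) (use assms(1) in \<open>auto simp: is_subfield_def\<close>)
qed (use assms(1) in \<open>simp add: is_subfield_def\<close>)

lemma sum_pivot_elimination:
  fixes f :: "'i \<Rightarrow> 'b \<Rightarrow> 'a::field"
  assumes "finite I" "j \<in> I"
  shows "(\<Sum>i\<in>I. (if i = j then - (\<Sum>k\<in>I - {j}. c k * q k) else c i) * f i y) =
    (\<Sum>i\<in>I - {j}. c i * (f i y - q i * f j y))"
proof -
  have "(\<Sum>i\<in>I. (if i = j then - (\<Sum>k\<in>I - {j}. c k * q k) else c i) * f i y) =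
      - (\<Sum>k\<in>I - {j}. c k * q k) * f j y + (\<Sum>i\<in>I - {j}. c i * f i y)"
    using assms by (simp add: sum.remove)
  also have "\<dots> = (\<Sum>i\<in>I - {j}. c i * f i y) - (\<Sum>i\<in>I - {j}. c i * (q i * f j y))"
    by (simp add: sum_distrib_right mult.assoc)
  also have "\<dots> = (\<Sum>i\<in>I - {j}. c i * (f i y - q i * f j y))"
    by (simp add: right_diff_distrib sum_subtractf)
  finally show ?thesis .
qed

text \<open>Gaussian elimination over F, one point at a time.\<close>
lemma subfield_nontrivial_relation:
  fixes f :: "'i \<Rightarrow> 'b \<Rightarrow> 'a::field"
  assumes F: "is_subfield F"
  shows "finite D \<Longrightarrow> finite I \<Longrightarrow> card D < card I \<Longrightarrow> (\<forall>i\<in>I. \<forall>x\<in>D. f i x \<in> F) \<Longrightarrow>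
    \<exists>c. (\<forall>i\<in>I. c i \<in> F) \<and> (\<exists>i\<in>I. c i \<noteq> 0) \<and> (\<forall>x\<in>D. (\<Sum>i\<in>I. c i * f i x) = 0)"
proof (induction D arbitrary: I f rule: finite_induct)
  case empty
  then obtain i0 where "i0 \<in> I" by fastforce
  then show ?case
    by (intro exI[of _ "\<lambda>i. if i = i0 then 1 else 0"]) (use F in \<open>auto simp: is_subfield_def\<close>)
next
  case (insert x D)
  show ?case
  proof (cases "\<forall>i\<in>I. f i x = 0")
    case True
    have "card D < card I" using insert by simp
    then obtain c where "\<forall>i\<in>I. c i \<in> F" "\<exists>i\<in>I. c i \<noteq> 0" "\<forall>y\<in>D. (\<Sum>i\<in>I. c i * f i y) = 0"
      using insert.IH[OF insert.prems(1)] insert.prems(3) by blast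
    then show ?thesis using True by (intro exI[of _ c]) auto
  next
    case False
    then obtain j where j: "j \<in> I" "f j x \<noteq> 0" by blast
    define I' where "I' = I - {j}"
    define q where "q i = f i x * inverse (f j x)" for i
    define h where "h i y = f i y - q i * f j y" for i y
    have q: "q i \<in> F" if "i \<in> I" for i
    proof -
      have "f i x \<in> F" "f j x \<in> F" using that j(1) insert.prems(3) by auto
      then show ?thesis unfolding q_def by (intro subfield_mult[OF F] subfield_inverse[OF F])
    qed
    have "finite I'" "card D < card I'" using insert j unfolding I'_def by auto
    moreover have "\<forall>i\<in>I'. \<forall>y\<in>D. h i y \<in> F"
      unfolding h_def I'_def using q insert.prems(3) j(1) F by (simp add: subfield_diff subfield_mult)
    ultimately obtain c' where c': "\<forall>i\<in>I'. c' i \<in> F" "\<exists>i\<in>I'. c' i \<noteq> 0"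
      "\<forall>y\<in>D. (\<Sum>i\<in>I'. c' i * h i y) = 0"
      using insert.IH by blast
    define c where "c i = (if i = j then - (\<Sum>k\<in>I'. c' k * q k) else c' i)" for i
    have sum_c: "(\<Sum>i\<in>I. c i * f i y) = (\<Sum>i\<in>I'. c' i * h i y)" for y
      unfolding c_def h_def I'_def by (rule sum_pivot_elimination[OF insert.prems(1) j(1)])
    have "(\<Sum>k\<in>I'. c' k * q k) \<in> F"
      using c'(1) q unfolding I'_def by (intro subfield_sum[OF F] subfield_mult[OF F]) auto
    then have "c j \<in> F" unfolding c_def by (simp add: subfield_uminus[OF F])
    then have "\<forall>i\<in>I. c i \<in> F" using c'(1) unfolding c_def I'_def by auto
    moreover have "\<exists>i\<in>I. c i \<noteq> 0" using c'(2) by (auto simp: c_def I'_def)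
    moreover have "h i x = 0" for i using j by (simp add: h_def q_def)
    then have "\<forall>y\<in>insert x D. (\<Sum>i\<in>I. c i * f i y) = 0" using sum_c c'(3) by auto
    ultimately show ?thesis by blast
  qed
qed

lemma mat_over_matrix_mul:
  assumes "is_subfield K" "mat_over K X" "mat_over K Y"
  shows "mat_over K (X ** Y)"
  using assms unfolding mat_over_def matrix_matrix_mult_def
  by (auto intro!: subfield_sum subfield_mult)

lemma mat_over_mat:
  assumes "is_subfield K" "c \<in> K"
  shows "mat_over K (mat c)"
  using assms unfolding mat_over_def mat_def by (auto simp: is_subfield_def)

lemma mat_over_sum:
  assumes "is_subfield K" "\<And>k. k \<in> S \<Longrightarrow> mat_over K (Y k)"
  shows "mat_over K (\<Sum>k\<in>S. Y k)"
  using assms unfolding mat_over_def sum_component by (auto intro!: subfield_sum)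

lemma mat_over_list_prod:
  assumes K: "is_subfield K" and "\<And>i. i \<in> set is \<Longrightarrow> mat_over K (A i)"
  shows "mat_over K (list_prod A is)"
  using assms(2)
  by (induction "is") (auto intro: mat_over_matrix_mul[OF K] mat_over_mat[OF K] simp: K[unfolded is_subfield_def])


section \<open>Laplace expansion along a set of rows\<close>

definition row_choices :: "'n::finite set \<Rightarrow> ('n \<Rightarrow> 'n) set" where
  "row_choices T = {f. \<forall>i. i \<notin> T \<longrightarrow> f i = i}"

definition unit_rows_det :: "'n::finite set \<Rightarrow> ('n \<Rightarrow> 'a::comm_ring_1^'n) \<Rightarrow> ('n \<Rightarrow> 'n) \<Rightarrow> 'a" where
  "unit_rows_det T u f = det (\<chi> i. if i \<in> T then axis (f i) 1 else u i)"

definition canonical_choice :: "'n::finite set \<Rightarrow> 'n set \<Rightarrow> 'n \<Rightarrow> 'n" where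
  "canonical_choice T S = (SOME g. g \<in> row_choices T \<and> inj_on g T \<and> g ` T = S)"

definition choice_perm :: "'n::finite set \<Rightarrow> ('n \<Rightarrow> 'n) \<Rightarrow> 'n \<Rightarrow> 'n" where
  "choice_perm T f = (\<lambda>i. if i \<in> T then inv_into T (canonical_choice T (f ` T)) (f i) else i)"

text \<open>
  Up to sign, complementary_minor T u S is the minor of the rows u i (i \<notin> T) in the
  columns outside S, and signed_minor T w S is the minor of the rows w i (i \<in> T) in the
  columns S.
\<close>
definition complementary_minor :: "'n::finite set \<Rightarrow> ('n \<Rightarrow> 'a::comm_ring_1^'n) \<Rightarrow> 'n set \<Rightarrow> 'a" where
  "complementary_minor T u S = unit_rows_det T u (canonical_choice T S)"

definition signed_minor :: "'n::finite set \<Rightarrow> ('n \<Rightarrow> 'a::comm_ring_1^'n) \<Rightarrow> 'n set \<Rightarrow> 'a" where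
  "signed_minor T w S = (\<Sum>f \<in> {f \<in> row_choices T. inj_on f T \<and> f ` T = S}.
     (\<Prod>i\<in>T. w i $ f i) * of_int (sign (choice_perm T f)))"

lemma det_expand_rows:
  fixes u w :: "'n::finite \<Rightarrow> 'a::comm_ring_1^'n"
  shows "det (\<chi> i. if i \<in> T then w i else u i) =
    (\<Sum>f\<in>row_choices T. (\<Prod>i\<in>T. w i $ f i) * unit_rows_det T u f)"
proof -
  have expand: "(\<chi> i. if i \<in> T then w i else u i) =
      (\<chi> i. if i \<in> T then (\<Sum>j\<in>UNIV. (w i $ j) *s axis j 1) else u i)"
    by (rule Cart_lambda_cong) (simp only: basis_expansion)
  have "det (\<chi> i. if i \<in> T then w i else u i) =
     (\<Sum>f\<in>row_choices T. det (\<chi> i. if i \<in> T then (w i $ f i) *s axis (f i) 1 else u i))"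
    unfolding expand
    using det_linear_rows_sum_lemma[of UNIV T "\<lambda>i j. (w i $ j) *s axis j 1" u]
    by (simp add: row_choices_def)
  also have "\<dots> = (\<Sum>f\<in>row_choices T. (\<Prod>i\<in>T. w i $ f i) * unit_rows_det T u f)"
  proof (rule sum.cong[OF refl])
    fix f
    have "(\<chi> i. if i \<in> T then (w i $ f i) *s axis (f i) 1 else u i) =
          (\<chi> i. (if i \<in> T then w i $ f i else 1) *s (if i \<in> T then axis (f i) 1 else u i))"
      by (rule Cart_lambda_cong) simp
    then have "det (\<chi> i. if i \<in> T then (w i $ f i) *s axis (f i) 1 else u i) =
       (\<Prod>i\<in>UNIV. if i \<in> T then w i $ f i else 1) * unit_rows_det T u f"
      by (simp add: det_rows_mul unit_rows_det_def)
    also have "(\<Prod>i\<in>UNIV. if i \<in> T then w i $ f i else 1) = (\<Prod>i\<in>T. w i $ f i)"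
      by (simp add: prod.If_cases)
    finally show "det (\<chi> i. if i \<in> T then (w i $ f i) *s axis (f i) 1 else u i) =
        (\<Prod>i\<in>T. w i $ f i) * unit_rows_det T u f" .
  qed
  finally show ?thesis .
qed

lemma unit_rows_det_not_inj:
  assumes "\<not> inj_on f T"
  shows "unit_rows_det T (u::'n::finite \<Rightarrow> 'a::comm_ring_1^'n) f = 0"
proof -
  obtain i i' where ii: "i \<in> T" "i' \<in> T" "i \<noteq> i'" "f i = f i'"
    using assms unfolding inj_on_def by blast
  show ?thesis unfolding unit_rows_det_def
    by (rule det_identical_rows[OF ii(3)]) (simp add: row_def ii vec_eq_iff)
qed

lemma canonical_choice:
  assumes "f \<in> row_choices T" "inj_on f T"
  shows "canonical_choice T (f ` T) \<in> row_choices T" "inj_on (canonical_choice T (f ` T)) T"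
    "canonical_choice T (f ` T) ` T = f ` T"
proof -
  have "\<exists>g. g \<in> row_choices T \<and> inj_on g T \<and> g ` T = f ` T" using assms by blast
  from someI_ex[OF this] show "canonical_choice T (f ` T) \<in> row_choices T"
    "inj_on (canonical_choice T (f ` T)) T" "canonical_choice T (f ` T) ` T = f ` T"
    unfolding canonical_choice_def by blast+
qed

lemma unit_rows_det_inj:
  assumes f: "f \<in> row_choices T" "inj_on f T"
  shows "unit_rows_det T (u::'n::finite \<Rightarrow> 'a::comm_ring_1^'n) f =
    of_int (sign (choice_perm T f)) * complementary_minor T u (f ` T)"
proof -
  define g where "g = canonical_choice T (f ` T)"
  have g: "inj_on g T" "g ` T = f ` T" using canonical_choice[OF f] unfolding g_def by blast+
  define p where "p = choice_perm T f"
  have p: "p i = (if i \<in> T then inv_into T g (f i) else i)" for i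
    unfolding p_def choice_perm_def g_def by simp
  have "bij_betw (inv_into T g \<circ> f) T T"
  proof (rule bij_betw_trans)
    show "bij_betw f T (f ` T)" using f(2) by (simp add: bij_betw_imageI)
    have "bij_betw g T (f ` T)" using g by (metis bij_betw_imageI)
    then show "bij_betw (inv_into T g) (f ` T) T" by (rule bij_betw_inv_into)
  qed
  then have "bij_betw p T T"
    by (rule bij_betw_cong[THEN iffD1, rotated]) (simp add: p)
  then have "p permutes T" by (rule bij_imp_permutes) (simp add: p)
  then have perm: "p permutes UNIV" by (rule permutes_subset) simp
  define B where "B = (\<chi> i. if i \<in> T then axis (g i) 1 else u i)"
  have permuted: "(\<chi> i. if i \<in> T then axis (f i) 1 else u i) = (\<chi> i. B $ p i)"
  proof (rule Cart_lambda_cong)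
    fix i
    show "(if i \<in> T then axis (f i) 1 else u i) = B $ p i"
    proof (cases "i \<in> T")
      case True
      have fi: "f i \<in> g ` T" using True g(2) by blast
      have "p i \<in> T" using True p inv_into_into[OF fi] by simp
      moreover have "g (p i) = f i" using True p f_inv_into_f[OF fi] by simp
      ultimately show ?thesis using True by (simp add: B_def)
    qed (simp add: B_def p)
  qed
  have "det B = complementary_minor T u (f ` T)"
    unfolding B_def complementary_minor_def unit_rows_det_def g_def ..
  then show ?thesis
    unfolding unit_rows_det_def permuted det_permute_rows[OF perm] by (simp add: p_def)
qed

theorem det_laplace_rows:
  fixes u w :: "'n::finite \<Rightarrow> 'a::comm_ring_1^'n"
  shows "det (\<chi> i. if i \<in> T then w i else u i) =
    (\<Sum>S\<in>{S. card S = card T}. complementary_minor T u S * signed_minor T w S)"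
proof -
  let ?c = "\<lambda>f. (\<Prod>i\<in>T. w i $ f i)"
  let ?t = "\<lambda>f. complementary_minor T u (f ` T) * (?c f * of_int (sign (choice_perm T f)))"
  let ?G = "{f \<in> row_choices T. inj_on f T}"
  have "det (\<chi> i. if i \<in> T then w i else u i) = (\<Sum>f\<in>row_choices T. ?c f * unit_rows_det T u f)"
    by (rule det_expand_rows)
  also have "\<dots> = (\<Sum>f\<in>?G. ?c f * unit_rows_det T u f)"
    by (rule sum.mono_neutral_right) (auto simp: unit_rows_det_not_inj)
  also have "\<dots> = (\<Sum>f\<in>?G. ?t f)"
  proof (rule sum.cong[OF refl])
    fix f assume "f \<in> ?G"
    then have "unit_rows_det T u f = of_int (sign (choice_perm T f)) * complementary_minor T u (f ` T)"
      by (intro unit_rows_det_inj) auto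
    then show "?c f * unit_rows_det T u f = ?t f" by (simp only: mult_ac)
  qed
  also have "\<dots> = (\<Sum>S\<in>{S. card S = card T}. \<Sum>f\<in>{f \<in> ?G. f ` T = S}. ?t f)"
    by (rule sum.group[symmetric]) (auto simp: card_image)
  also have "\<dots> = (\<Sum>S\<in>{S. card S = card T}. complementary_minor T u S * signed_minor T w S)"
  proof (rule sum.cong[OF refl])
    fix S
    have "(\<Sum>f\<in>{f \<in> ?G. f ` T = S}. ?t f) =
      (\<Sum>f\<in>{f \<in> row_choices T. inj_on f T \<and> f ` T = S}.
         complementary_minor T u S * (?c f * of_int (sign (choice_perm T f))))"
      by (rule sum.cong) auto
    then show "(\<Sum>f\<in>{f \<in> ?G. f ` T = S}. ?t f) = complementary_minor T u S * signed_minor T w S"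
      by (simp add: signed_minor_def sum_distrib_left)
  qed
  finally show ?thesis .
qed


section \<open>A skew Bollobas-type bound for pairs of subspaces\<close>

lemma det_ne_0_iff_span_rows: "det (M::'a::field^'n^'n) \<noteq> 0 \<longleftrightarrow> vec.span (rows M) = UNIV"
proof -
  have "det M \<noteq> 0 \<longleftrightarrow> invertible M" by (simp add: invertible_det_nz)
  also have "\<dots> \<longleftrightarrow> (\<exists>B::'a^'n^'n. B ** M = mat 1)" by (rule invertible_left_inverse)
  also have "\<dots> \<longleftrightarrow> vec.span (rows M) = UNIV" by (rule matrix_left_invertible_span_rows_gen)
  finally show ?thesis .
qed

lemma dim_eq_CARD_iff_span_eq_UNIV:
  "vec.dim (S::('a::field^'n) set) = CARD('n) \<longleftrightarrow> vec.span S = UNIV"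
  using vec.dim_eq_full[of S] by (simp add: vec.dimension_def card_cart_basis)

lemma rows_vec_lambda: "rows (\<chi> i. g i) = range g"
  by (auto simp: rows_def row_def vec_eq_iff)

lemma exists_indexed_spanning_family:
  assumes "vec.subspace U" "vec.dim U = card R" "finite R"
  shows "\<exists>u. vec.span ((u::'i \<Rightarrow> 'a::field^'n) ` R) = U"
proof -
  obtain B where B: "B \<subseteq> U" "vec.independent B" "U \<subseteq> vec.span B" "card B = vec.dim U"
    using vec.basis_exists by blast
  have "finite B" using B(2) vec.independent_bound_general by blast
  then obtain h where "bij_betw h R B"
    using finite_same_card_bij[OF assms(3)] B(4) assms(2) by metis
  then have "h ` R = B" by (rule bij_betw_imp_surj_on)
  moreover have "vec.span B = U" using B assms(1) vec.span_minimal vec.span_superset by blast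
  ultimately show ?thesis by blast
qed

lemma det_mixed_rows_ne_0_iff:
  fixes u w :: "'n::finite \<Rightarrow> 'a::field^'n"
  assumes U: "vec.subspace U" "vec.dim U = r" "vec.span (u ` (- T)) = U"
    and W: "vec.subspace W" "vec.dim W = CARD('n) - r" "vec.span (w ` T) = W"
    and "r \<le> CARD('n)"
  shows "det (\<chi> i. if i \<in> T then w i else u i) \<noteq> 0 \<longleftrightarrow> U \<inter> W = {0}"
proof -
  let ?UW = "{x + y |x y. x \<in> U \<and> y \<in> W}"
  have "rows (\<chi> i. if i \<in> T then w i else u i) = u ` (- T) \<union> w ` T"
    unfolding rows_vec_lambda by auto
  then have span_rows: "vec.span (rows (\<chi> i. if i \<in> T then w i else u i)) = ?UW"
    by (simp only: vec.span_Un U(3) W(3))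
  have span_UW: "vec.span ?UW = ?UW"
    using vec.subspace_sums[OF U(1) W(1)] by (rule vec.span_eq_iff[THEN iffD2])
  have "det (\<chi> i. if i \<in> T then w i else u i) \<noteq> 0 \<longleftrightarrow> vec.dim ?UW = CARD('n)"
    unfolding det_ne_0_iff_span_rows dim_eq_CARD_iff_span_eq_UNIV span_rows span_UW ..
  also have "\<dots> \<longleftrightarrow> vec.dim (U \<inter> W) = 0"
    using vec.dim_sums_Int[OF U(1) W(1)] U(2) W(2) assms(7) by linarith
  also have "\<dots> \<longleftrightarrow> U \<inter> W = {0}"
    unfolding vec.dim_eq_0 using vec.subspace_0[OF U(1)] vec.subspace_0[OF W(1)] by blast
  finally show ?thesis .
qed

text \<open>
  A triangular matrix with nonzero diagonal has full rank, while a factorization through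
  D bounds the rank by card D.
\<close>
lemma card_le_if_triangular_factorization:
  fixes M :: "nat \<Rightarrow> nat \<Rightarrow> 'a::field"
  assumes "finite D"
    and factor: "\<And>a b. a < m \<Longrightarrow> b < m \<Longrightarrow> M a b = (\<Sum>S\<in>D. \<Psi> a S * \<Phi> b S)"
    and diag: "\<And>a. a < m \<Longrightarrow> M a a \<noteq> 0"
    and upper: "\<And>a b. a < b \<Longrightarrow> b < m \<Longrightarrow> M a b = 0"
  shows "m \<le> card D"
proof (rule ccontr)
  assume "\<not> m \<le> card D"
  then have "\<exists>c. (\<forall>b\<in>{..<m}. c b \<in> UNIV) \<and> (\<exists>b\<in>{..<m}. c b \<noteq> 0) \<and>
      (\<forall>S\<in>D. (\<Sum>b\<in>{..<m}. c b * \<Phi> b S) = 0)"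
    by (intro subfield_nontrivial_relation[OF is_subfield_UNIV \<open>finite D\<close>]) auto
  then obtain c where c: "\<exists>b. b < m \<and> c b \<noteq> 0" "\<And>S. S \<in> D \<Longrightarrow> (\<Sum>b<m. c b * \<Phi> b S) = 0"
    by auto
  have relation: "(\<Sum>b<m. c b * M a b) = 0" if "a < m" for a
  proof -
    have "(\<Sum>b<m. c b * M a b) = (\<Sum>b<m. \<Sum>S\<in>D. c b * (\<Psi> a S * \<Phi> b S))"
      using that by (simp add: factor sum_distrib_left)
    also have "\<dots> = (\<Sum>S\<in>D. \<Sum>b<m. c b * (\<Psi> a S * \<Phi> b S))"
      by (rule sum.swap)
    also have "\<dots> = (\<Sum>S\<in>D. \<Psi> a S * (\<Sum>b<m. c b * \<Phi> b S))"
      by (simp add: sum_distrib_left mult.left_commute)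
    also have "\<dots> = 0" using c(2) by simp
    finally show ?thesis .
  qed
  obtain b0 where b0: "b0 < m" "c b0 \<noteq> 0" and below: "\<And>b. b < b0 \<Longrightarrow> c b = 0"
    using exists_least_iff[THEN iffD1, OF c(1)] by (meson order.strict_trans)
  have "c b * M b0 b = 0" if "b \<in> {..<m} - {b0}" for b
    using that below upper[of b0 b] by (cases "b < b0") auto
  then have "(\<Sum>b<m. c b * M b0 b) = (\<Sum>b\<in>{b0}. c b * M b0 b)"
    using b0(1) by (intro sum.mono_neutral_right) auto
  then show False using relation[OF b0(1)] diag[OF b0(1)] b0(2) by simp
qed

theorem card_skew_subspace_pairs_le_binomial:
  fixes U W :: "nat \<Rightarrow> ('a::field^'n) set"
  assumes U: "\<And>a. a < m \<Longrightarrow> vec.subspace (U a) \<and> vec.dim (U a) = r"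
    and W: "\<And>a. a < m \<Longrightarrow> vec.subspace (W a) \<and> vec.dim (W a) = CARD('n) - r"
    and r: "r \<le> CARD('n)"
    and diag: "\<And>a. a < m \<Longrightarrow> U a \<inter> W a = {0}"
    and skew: "\<And>a b. a < b \<Longrightarrow> b < m \<Longrightarrow> U b \<inter> W a \<noteq> {0}"
  shows "m \<le> CARD('n) choose r"
proof -
  obtain R :: "'n set" where R: "card R = r"
    using obtain_subset_with_card_n[of r "UNIV::'n set"] r by auto
  define T where "T = - R"
  have card_T: "card T = CARD('n) - r"
    unfolding T_def using R by (simp add: Compl_eq_Diff_UNIV card_Diff_subset)
  have "\<forall>b. \<exists>u. b < m \<longrightarrow> vec.span ((u::'n \<Rightarrow> 'a^'n) ` (- T)) = U b"
  proof
    show "\<exists>u. b < m \<longrightarrow> vec.span ((u::'n \<Rightarrow> 'a^'n) ` (- T)) = U b" for b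
      using exists_indexed_spanning_family[of "U b" "- T"] U R unfolding T_def by auto
  qed
  then obtain u where u: "\<And>b. b < m \<Longrightarrow> vec.span (u b ` (- T)) = U b" by metis
  have "\<forall>a. \<exists>w. a < m \<longrightarrow> vec.span ((w::'n \<Rightarrow> 'a^'n) ` T) = W a"
  proof
    show "\<exists>w. a < m \<longrightarrow> vec.span ((w::'n \<Rightarrow> 'a^'n) ` T) = W a" for a
      using exists_indexed_spanning_family[of "W a" T] W card_T by auto
  qed
  then obtain w where w: "\<And>a. a < m \<Longrightarrow> vec.span (w a ` T) = W a" by metis
  define M where "M a b = det (\<chi> i. if i \<in> T then w a i else u b i)" for a b
  have M_ne_0_iff: "M a b \<noteq> 0 \<longleftrightarrow> U b \<inter> W a = {0}" if "a < m" "b < m" for a b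
    unfolding M_def using det_mixed_rows_ne_0_iff[of "U b" r "u b" T "W a" "w a"] U W u w that r
    by simp
  have "m \<le> card {S::'n set. card S = card T}"
  proof (rule card_le_if_triangular_factorization)
    show "M a b = (\<Sum>S\<in>{S. card S = card T}. signed_minor T (w a) S * complementary_minor T (u b) S)"
      for a b
      unfolding M_def det_laplace_rows by (simp add: mult.commute)
    show "M a a \<noteq> 0" if "a < m" for a using M_ne_0_iff diag that by simp
    show "M a b = 0" if "a < b" "b < m" for a b using M_ne_0_iff[of a b] skew[OF that] that by simp
  qed simp
  also have "\<dots> = CARD('n) choose r"
    using n_subsets[of "UNIV::'n set" "card T"] card_T binomial_symmetric[OF r] by simp
  finally show ?thesis .
qed


section \<open>Index-one matrices are completely pseudo-regular\<close>

primrec mat_pow :: "'a::semiring_1^'n^'n \<Rightarrow> nat \<Rightarrow> 'a^'n^'n" where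
  "mat_pow C 0 = mat 1"
| "mat_pow C (Suc k) = C ** mat_pow C k"

definition mat_poly :: "'a::semiring_1^'n^'n \<Rightarrow> (nat \<Rightarrow> 'a) \<Rightarrow> nat \<Rightarrow> 'a^'n^'n" where
  "mat_poly C c M = (\<Sum>k<M. mat (c k) ** mat_pow C k)"

lemma mat_matrix_mul_entry: "(mat c ** (X::'a::semiring_1^'n^'n)) $ i $ j = c * X $ i $ j"
proof -
  have "(mat c ** X) $ i $ j = (\<Sum>k\<in>UNIV. (if i = k then c else 0) * X $ k $ j)"
    by (simp add: matrix_matrix_mult_def mat_def)
  also have "\<dots> = (\<Sum>k\<in>UNIV. if i = k then c * X $ k $ j else 0)"
    by (rule sum.cong) auto
  finally show ?thesis by simp
qed

lemma matrix_mul_mat_entry: "((X::'a::comm_semiring_1^'n^'n) ** mat c) $ i $ j = c * X $ i $ j"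
proof -
  have "(X ** mat c) $ i $ j = (\<Sum>k\<in>UNIV. X $ i $ k * (if k = j then c else 0))"
    by (simp add: matrix_matrix_mult_def mat_def)
  also have "\<dots> = (\<Sum>k\<in>UNIV. if j = k then c * X $ i $ k else 0)"
    by (rule sum.cong) (auto simp: mult.commute)
  finally show ?thesis by simp
qed

lemma mat_matrix_mul_commute: "mat c ** (X::'a::comm_semiring_1^'n^'n) = X ** mat c"
  by (simp add: vec_eq_iff mat_matrix_mul_entry matrix_mul_mat_entry)

lemma matrix_mul_mat_left_commute: "(X::'a::comm_semiring_1^'n^'n) ** (mat c ** Y) = mat c ** (X ** Y)"
  by (metis matrix_mul_assoc mat_matrix_mul_commute)

lemma matrix_mul_sum_right: "(X::'a::comm_semiring_1^'n^'n) ** (\<Sum>k\<in>S. Y k) = (\<Sum>k\<in>S. X ** Y k)"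
  by (simp add: vec_eq_iff matrix_matrix_mult_def sum_component sum_distrib_left sum.swap[of _ S])

lemma matrix_mul_sum_left: "(\<Sum>k\<in>S. Y k) ** (X::'a::comm_semiring_1^'n^'n) = (\<Sum>k\<in>S. Y k ** X)"
  by (simp add: vec_eq_iff matrix_matrix_mult_def sum_component sum_distrib_right sum.swap[of _ S])

lemma mat_pow_commute: "C ** mat_pow C k = mat_pow C k ** (C::'a::semiring_1^'n^'n)"
  by (induction k) (simp_all add: matrix_mul_assoc)

lemma mat_poly_commute: "C ** mat_poly C c M = mat_poly C c M ** (C::'a::comm_semiring_1^'n^'n)"
  unfolding mat_poly_def matrix_mul_sum_right matrix_mul_sum_left
  by (rule sum.cong[OF refl]) (metis matrix_mul_assoc mat_matrix_mul_commute mat_pow_commute)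

lemma mat_poly_Suc:
  "mat_poly C c (Suc M) = mat (c 0) + C ** mat_poly C (\<lambda>k. c (Suc k)) (M::nat)"
  for C :: "'a::comm_semiring_1^'n^'n"
  unfolding mat_poly_def sum.lessThan_Suc_shift matrix_mul_sum_right
  by (simp add: matrix_mul_mat_left_commute)

lemma mat_over_mat_pow:
  assumes "is_subfield K" "mat_over K C"
  shows "mat_over K (mat_pow C k)"
  by (induction k) (use assms in \<open>auto intro: mat_over_matrix_mul mat_over_mat simp: is_subfield_def\<close>)

lemma mat_over_mat_poly:
  assumes "is_subfield K" "mat_over K C" "\<And>k. c k \<in> K"
  shows "mat_over K (mat_poly C c M)"
  unfolding mat_poly_def using assms
  by (intro mat_over_sum) (auto intro!: mat_over_matrix_mul mat_over_mat mat_over_mat_pow)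

lemma index_one_cancel:
  assumes "mat_im C \<inter> mat_ker C = {0}" and "C ** (C ** Y) = 0"
  shows "C ** Y = (0::'a::field^'n^'n)"
proof -
  have "(C ** Y) *v v = 0" for v
  proof -
    have "(C ** Y) *v v = C *v (Y *v v)" by (simp add: matrix_vector_mul_assoc)
    then have "(C ** Y) *v v \<in> mat_im C" by (simp add: mat_im_def)
    moreover have "C *v ((C ** Y) *v v) = 0"
      using assms(2) by (metis matrix_vector_mul_assoc matrix_vector_mult_0)
    then have "(C ** Y) *v v \<in> mat_ker C" by (simp add: mat_ker_def)
    ultimately show ?thesis using assms(1) by blast
  qed
  then show ?thesis by (simp add: matrix_eq)
qed

text \<open>
  Write p(t) = c_0 + t q(t) and suppose C p(C) = 0.  If c_0 = 0, then C (C q(C)) = 0, so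
  index one gives C q(C) = 0 and we recurse on q; otherwise C = C (C P) with P = - q(C) / c_0.
\<close>
lemma index_one_polynomial_relation:
  fixes C :: "complex^'n^'n"
  assumes K: "is_subfield K" and CK: "mat_over K C" and index: "mat_im C \<inter> mat_ker C = {0}"
  shows "(\<And>k. c k \<in> K) \<Longrightarrow> \<exists>k<M. c k \<noteq> 0 \<Longrightarrow> C ** mat_poly C c M = 0 \<Longrightarrow>
    \<exists>P. mat_over K P \<and> C ** P = P ** C \<and> C ** (C ** P) = C"
proof (induction M arbitrary: c)
  case 0
  then show ?case by simp
next
  case (Suc M)
  define Q where "Q = mat_poly C (\<lambda>k. c (Suc k)) M"
  have QK: "mat_over K Q" unfolding Q_def using mat_over_mat_poly[OF K CK] Suc.prems(1) by simp
  have CQ: "C ** Q = Q ** C" unfolding Q_def by (rule mat_poly_commute)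
  have rel: "mat (c 0) ** C + C ** (C ** Q) = 0"
    using Suc.prems(3) unfolding mat_poly_Suc Q_def[symmetric]
    by (simp add: matrix_add_ldistrib mat_matrix_mul_commute)
  show ?case
  proof (cases "c 0 = 0")
    case True
    then have "C ** Q = 0" using rel index_one_cancel[OF index] by simp
    moreover obtain k where "k < Suc M" "c k \<noteq> 0" using Suc.prems(2) by blast
    then have "\<exists>k<M. c (Suc k) \<noteq> 0" using True by (cases k) auto
    ultimately show ?thesis using Suc.IH[of "\<lambda>k. c (Suc k)"] Suc.prems(1) unfolding Q_def by blast
  next
    case False
    define P where "P = mat (- inverse (c 0)) ** Q"
    have "mat_over K P"
      unfolding P_def using K Suc.prems(1) False QK
      by (intro mat_over_matrix_mul mat_over_mat) (auto simp: is_subfield_def)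
    moreover have "C ** P = P ** C"
      unfolding P_def matrix_mul_mat_left_commute CQ by (simp add: matrix_mul_assoc)
    moreover have "C ** (C ** Q) = - (mat (c 0) ** C)"
      using rel by (simp add: eq_neg_iff_add_eq_0 add.commute)
    then have "C ** (C ** P) = mat (- inverse (c 0)) ** (- (mat (c 0) ** C))"
      unfolding P_def matrix_mul_mat_left_commute by simp
    then have "C ** (C ** P) = C"
      using False by (simp add: vec_eq_iff mat_matrix_mul_entry)
    ultimately show ?thesis by blast
  qed
qed

lemma index_one_commuting_inverse:
  fixes C :: "complex^'n^'n"
  assumes K: "is_subfield K" and CK: "mat_over K C" and index: "mat_im C \<inter> mat_ker C = {0}"
  shows "\<exists>P. mat_over K P \<and> C ** P = P ** C \<and> C ** (C ** P) = C"
proof -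
  let ?M = "Suc CARD('n \<times> 'n)"
  define f where "f k p = mat_pow C (Suc k) $ fst p $ snd p" for k :: nat and p :: "'n \<times> 'n"
  have "\<And>k p. k \<in> {..<?M} \<Longrightarrow> p \<in> UNIV \<Longrightarrow> f k p \<in> K"
    using mat_over_mat_pow[OF K CK] unfolding f_def mat_over_def by blast
  then obtain c where c: "\<forall>k\<in>{..<?M}. c k \<in> K" "\<exists>k\<in>{..<?M}. c k \<noteq> 0"
      "\<forall>p. (\<Sum>k\<in>{..<?M}. c k * f k p) = 0"
    using subfield_nontrivial_relation[OF K, of UNIV "{..<?M}" f] by auto
  define c' where "c' k = (if k < ?M then c k else 0)" for k
  have "C ** mat_poly C c' ?M = (\<Sum>k<?M. mat (c' k) ** mat_pow C (Suc k))"
    unfolding mat_poly_def matrix_mul_sum_right by (simp add: matrix_mul_mat_left_commute)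
  also have "\<dots> = 0"
  proof -
    have "(\<Sum>k<?M. mat (c' k) ** mat_pow C (Suc k)) $ i $ j = (\<Sum>k<?M. c k * f k (i, j))" for i j
      unfolding sum_component mat_matrix_mul_entry f_def by (rule sum.cong) (auto simp: c'_def)
    then show ?thesis using c(3) by (simp add: vec_eq_iff)
  qed
  finally have "C ** mat_poly C c' ?M = 0" .
  moreover have "c' k \<in> K" for k using c(1) K by (auto simp: c'_def is_subfield_def)
  moreover have "\<exists>k<?M. c' k \<noteq> 0" using c(2) by (auto simp: c'_def)
  ultimately show ?thesis using index_one_polynomial_relation[OF K CK index] by blast
qed

text \<open>
  The group: K-matrices M with eM = M = Me that are invertible relative to the
  idempotent e = CY.
\<close>
lemma completely_pseudo_regular_if_group_inverse:
  fixes C Y :: "complex^'n^'n"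
  assumes K: "is_subfield K" and CK: "mat_over K C" and YK: "mat_over K Y"
    and comm: "C ** Y = Y ** C" and CYC: "C ** Y ** C = C" and YCY: "Y ** C ** Y = Y"
  shows "completely_pseudo_regular K C"
proof -
  define e where "e = C ** Y"
  define G where "G = {M. mat_over K M \<and> e ** M = M \<and> M ** e = M \<and>
      (\<exists>N. mat_over K N \<and> e ** N = N \<and> N ** e = N \<and> M ** N = e \<and> N ** M = e)}"
  have eC: "e ** C = C" using CYC unfolding e_def .
  have "C ** e = C ** (Y ** C)" by (simp only: e_def comm)
  also have "\<dots> = C" using CYC by (simp only: matrix_mul_assoc)
  finally have Ce: "C ** e = C" .
  have eY: "e ** Y = Y" unfolding e_def comm by (rule YCY)
  have Ye: "Y ** e = Y" unfolding e_def by (simp only: matrix_mul_assoc YCY)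
  have CY: "C ** Y = e" and YC: "Y ** C = e" unfolding e_def comm by simp_all
  have "C \<in> G" unfolding G_def using CK YK eC Ce eY Ye CY YC by blast
  moreover have "e \<in> G"
  proof -
    have "e ** e = e" unfolding e_def by (simp only: matrix_mul_assoc CYC)
    moreover have "mat_over K e" unfolding e_def using K CK YK by (rule mat_over_matrix_mul)
    ultimately show ?thesis unfolding G_def by blast
  qed
  moreover have "x ** y \<in> G" if xy: "x \<in> G" "y \<in> G" for x y
  proof -
    obtain Nx Ny where x: "mat_over K x" "e ** x = x" "x ** e = x" "mat_over K Nx" "e ** Nx = Nx"
        "Nx ** e = Nx" "x ** Nx = e" "Nx ** x = e"
      and y: "mat_over K y" "e ** y = y" "y ** e = y" "mat_over K Ny" "e ** Ny = Ny"
        "Ny ** e = Ny" "y ** Ny = e" "Ny ** y = e"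
      using xy unfolding G_def by blast
    have "(x ** y) ** (Ny ** Nx) = x ** ((y ** Ny) ** Nx)" by (simp only: matrix_mul_assoc)
    then have inv1: "(x ** y) ** (Ny ** Nx) = e" using x(7) y(7) x(5) by simp
    have "(Ny ** Nx) ** (x ** y) = Ny ** ((Nx ** x) ** y)" by (simp only: matrix_mul_assoc)
    then have inv2: "(Ny ** Nx) ** (x ** y) = e" using y(8) x(8) y(2) by simp
    have "e ** (x ** y) = x ** y" "(x ** y) ** e = x ** y"
      "e ** (Ny ** Nx) = Ny ** Nx" "(Ny ** Nx) ** e = Ny ** Nx"
      using x(2) y(3) y(5) x(6) by (simp_all add: matrix_mul_assoc[symmetric] matrix_mul_assoc)
    then show ?thesis
      unfolding G_def using inv1 inv2 x(1,4) y(1,4) mat_over_matrix_mul[OF K] by blast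
  qed
  moreover have "\<exists>y\<in>G. x ** y = e \<and> y ** x = e" if "x \<in> G" for x
    using that unfolding G_def by blast
  moreover have "\<forall>M\<in>G. mat_over K M" "\<forall>x\<in>G. e ** x = x \<and> x ** e = x"
    unfolding G_def by blast+
  ultimately show ?thesis
    unfolding completely_pseudo_regular_def by (intro exI[of _ G] exI[of _ e]) blast
qed

theorem completely_pseudo_regular_if_index_one:
  fixes C :: "complex^'n^'n"
  assumes K: "is_subfield K" and CK: "mat_over K C" and index: "mat_im C \<inter> mat_ker C = {0}"
  shows "completely_pseudo_regular K C"
proof -
  obtain P where P: "mat_over K P" "C ** P = P ** C" "C ** (C ** P) = C"
    using index_one_commuting_inverse[OF K CK index] by blast
  have PC: "P ** C = C ** P" using P(2) by simp
  define Y where "Y = C ** (P ** P)"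
  have CY: "C ** Y = C ** P"
  proof -
    have "C ** Y = (C ** (C ** P)) ** P" unfolding Y_def by (simp only: matrix_mul_assoc)
    then show ?thesis using P(3) by simp
  qed
  have YC: "Y ** C = C ** P"
  proof -
    have "Y ** C = C ** (P ** (P ** C))" unfolding Y_def by (simp only: matrix_mul_assoc)
    also have "\<dots> = C ** ((P ** C) ** P)" by (simp only: PC matrix_mul_assoc)
    also have "\<dots> = (C ** (C ** P)) ** P" by (simp only: PC matrix_mul_assoc)
    finally show ?thesis using P(3) by simp
  qed
  have CPC: "C ** P ** C = C"
    using P(3) by (simp only: PC matrix_mul_assoc[symmetric])
  show ?thesis
  proof (rule completely_pseudo_regular_if_group_inverse[OF K CK])
    show "mat_over K Y" unfolding Y_def using CK P(1) by (intro mat_over_matrix_mul[OF K])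
    show "C ** Y = Y ** C" using CY YC by simp
    show "C ** Y ** C = C" using CY CPC by simp
    have "C ** P ** Y = Y" unfolding Y_def using CPC by (simp only: matrix_mul_assoc)
    then show "Y ** C ** Y = Y" using YC by simp
  qed
qed


section \<open>Products of constant rank\<close>

lemma length_shortest_rank_preserving_word_lt:
  fixes P Q :: "'a::field^'n^'n" and B :: "nat \<Rightarrow> 'a^'n^'n"
  assumes P: "rank P = r" and Q: "rank Q = r"
    and word: "rank (P ** list_prod B js ** Q) = r"
    and shortest: "\<And>a b. a < b \<Longrightarrow> b \<le> length js \<Longrightarrow>
      rank (P ** list_prod B (take a js @ drop b js) ** Q) \<noteq> r"
  shows "length js < CARD('n) choose r"
proof -
  define L where "L a = P ** list_prod B (take a js)" for a
  define R where "R b = list_prod B (drop b js) ** Q" for b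
  have LR: "L a ** R b = P ** list_prod B (take a js @ drop b js) ** Q" for a b
    unfolding L_def R_def list_prod_append by (simp only: matrix_mul_assoc)
  have LR_same: "rank (L a ** R a) = r" for a
    using LR[of a a] word by simp
  have rank_L: "rank (L a) = r" for a
    using rank_matrix_mul_le_left[of P "list_prod B (take a js)"]
      rank_matrix_mul_le_left[of "L a" "R a"] LR_same[of a] P
    unfolding L_def by linarith
  have rank_R: "rank (R b) = r" for b
    using rank_matrix_mul_le_right[of "list_prod B (drop b js)" Q]
      rank_matrix_mul_le_right[of "L b" "R b"] LR_same[of b] Q
    unfolding R_def by linarith
  have "length js + 1 \<le> CARD('n) choose r"
  proof (rule card_skew_subspace_pairs_le_binomial[where U = "\<lambda>b. mat_im (R b)" and W = "\<lambda>a. mat_ker (L a)"])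
    show "vec.subspace (mat_im (R a)) \<and> vec.dim (mat_im (R a)) = r" for a
      using rank_R[of a] subspace_mat_im by (simp add: rank_eq_dim_mat_im)
    show "vec.subspace (mat_ker (L a)) \<and> vec.dim (mat_ker (L a)) = CARD('n) - r" for a
      using rank_L[of a] rank_add_dim_mat_ker[of "L a"] subspace_mat_ker by auto
    show "r \<le> CARD('n)" using P rank_le_CARD[of P] by simp
    show "mat_im (R a) \<inter> mat_ker (L a) = {0}" for a
      using LR_same[of a] rank_R[of a] rank_matrix_mul_eq_right_iff[of "L a" "R a"] by simp
    show "mat_im (R b) \<inter> mat_ker (L a) \<noteq> {0}" if "a < b" "b < length js + 1" for a b
      using shortest[of a b] that LR[of a b] rank_R[of b] rank_matrix_mul_eq_right_iff[of "L a" "R b"]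
      by simp
  qed
  then show ?thesis by simp
qed

context
  fixes A :: "nat \<Rightarrow> 'a::field^'n^'n" and n r :: nat
  assumes rank_prod: "rank (mprod A 1 n) = r"
    and rank_pairs: "\<forall>i\<in>{1..n-1}. rank (A i ** A (i + 1)) = r"
begin

lemma rank_pair:
  assumes "1 \<le> i" "i < n"
  shows "rank (A i ** A (Suc i)) = r"
  using rank_pairs assms by simp

lemma rank_mprod:
  assumes "1 \<le> i" "i < j" "j \<le> n"
  shows "rank (mprod A i j) = r"
proof -
  have "mprod A i j = (A i ** A (Suc i)) ** mprod A (Suc (Suc i)) j"
    using assms mprod_split[of i "Suc i" j A] by (simp add: mprod_Suc_same)
  then have "rank (mprod A i j) \<le> r"
    using rank_matrix_mul_le_left rank_pair assms by (metis less_le_trans)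
  moreover have "mprod A 1 n = mprod A 1 (i - 1) ** (mprod A i j ** mprod A (Suc j) n)"
    using assms mprod_split[of 1 "i - 1" n A] mprod_split[of i j n A] by simp
  then have "r \<le> rank (mprod A i j)"
    using rank_prod rank_matrix_mul_le_right rank_matrix_mul_le_left by (metis order_trans)
  ultimately show ?thesis by simp
qed

lemma mat_im_mprod:
  assumes "1 \<le> i" "i < j" "j \<le> n"
  shows "mat_im (mprod A i j) = mat_im (A i ** A (Suc i))"
proof -
  have split: "mprod A i j = (A i ** A (Suc i)) ** mprod A (Suc (Suc i)) j"
    using assms mprod_split[of i "Suc i" j A] by (simp add: mprod_Suc_same)
  have "rank (mprod A i j) = rank (A i ** A (Suc i))"
    using rank_mprod[OF assms] rank_pair assms by simp
  then show ?thesis unfolding split by (intro mat_im_matrix_mul_eq) (simp add: split)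
qed

lemma mat_ker_mprod:
  assumes "1 \<le> i" "i < j" "j \<le> n"
  shows "mat_ker (mprod A i j) = mat_ker (A (j - 1) ** A j)"
proof -
  have pair: "mprod A (j - 1) j = A (j - 1) ** A j"
    using assms mprod_Suc_same[of A "j - 1"] by simp
  have split: "mprod A i j = mprod A i (j - 2) ** (A (j - 1) ** A j)"
    using assms mprod_split[of i "j - 2" j A] pair by (simp add: numeral_2_eq_2 Suc_diff_Suc)
  have "rank (mprod A i j) = rank (A (j - 1) ** A j)"
    using rank_mprod[OF assms] rank_pair[of "j - 1"] assms by simp
  then show ?thesis unfolding split by (intro mat_ker_matrix_mul_eq) (simp add: split)
qed

lemma mat_im_inter_mat_ker_pairs:
  assumes "1 \<le> i" "i + 3 \<le> n"
  shows "mat_im (A (i + 2) ** A (i + 3)) \<inter> mat_ker (A i ** A (i + 1)) = {0}"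
proof -
  have "mprod A i (i + 3) = mprod A i (i + 1) ** mprod A (i + 2) (i + 3)"
    using mprod_split[of i "i + 1" "i + 3" A] by (simp add: numeral_2_eq_2)
  also have "\<dots> = (A i ** A (i + 1)) ** (A (i + 2) ** A (i + 3))"
    using mprod_Suc_same[of A i] mprod_Suc_same[of A "i + 2"] by (simp add: numeral_2_eq_2 numeral_3_eq_3)
  finally have "rank ((A i ** A (i + 1)) ** (A (i + 2) ** A (i + 3))) = r"
    using rank_mprod[of i "i + 3"] assms by simp
  then show ?thesis
    unfolding rank_matrix_mul_eq_right_iff[symmetric] using rank_pair[of "i + 2"] assms
    by (simp add: numeral_2_eq_2 numeral_3_eq_3)
qed

lemma index_one_subproduct_exists:
  assumes long: "n \<ge> 2 * (CARD('n) choose r) + 4"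
  shows "\<exists>k l. 1 \<le> k \<and> k < l \<and> l \<le> n \<and> mat_im (mprod A k l) \<inter> mat_ker (mprod A k l) = {0}"
proof (rule ccontr)
  assume none: "\<not> ?thesis"
  define m where "m = (CARD('n) choose r) + 1"
  \<comment> \<open>a counts pairs from the right, so that for a < b the pair of U b lies left of that of W a\<close>
  define l where "l a = 2 * (m - a)" for a
  define U where "U a = mat_im (A (l a + 1) ** A (l a + 2))" for a
  define W where "W a = mat_ker (A (l a - 1) ** A (l a))" for a
  have l: "2 \<le> l a" "l a + 2 \<le> n" if "a < m" for a
    using that long unfolding l_def m_def by auto
  have "m \<le> CARD('n) choose r"
  proof (rule card_skew_subspace_pairs_le_binomial[of m U r W])
    show "vec.subspace (U a) \<and> vec.dim (U a) = r" if "a < m" for a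
      unfolding U_def using rank_pair[of "l a + 1"] l[OF that] subspace_mat_im
      by (simp add: rank_eq_dim_mat_im)
    show "vec.subspace (W a) \<and> vec.dim (W a) = CARD('n) - r" if "a < m" for a
      unfolding W_def using rank_pair[of "l a - 1"] l[OF that] subspace_mat_ker
        rank_add_dim_mat_ker[of "A (l a - 1) ** A (l a)"]
      by auto
    show "r \<le> CARD('n)" using rank_prod rank_le_CARD by metis
    show "U a \<inter> W a = {0}" if "a < m" for a
      unfolding U_def W_def using mat_im_inter_mat_ker_pairs[of "l a - 1"] l[OF that]
      by (simp add: numeral_3_eq_3 numeral_2_eq_2)
    show "U b \<inter> W a \<noteq> {0}" if "a < b" "b < m" for a b
    proof -
      have kl: "1 \<le> l b + 1" "l b + 1 < l a" "l a \<le> n"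
        using that l[of a] l[of b] unfolding l_def by auto
      then have "mat_im (mprod A (l b + 1) (l a)) \<inter> mat_ker (mprod A (l b + 1) (l a)) \<noteq> {0}"
        using none by blast
      then show ?thesis using mat_im_mprod[OF kl] mat_ker_mprod[OF kl] unfolding U_def W_def by simp
    qed
  qed
  then show False unfolding m_def by simp
qed

lemma parallel_bracketed_product:
  assumes "n \<ge> 4" and rank_word: "rank (list_prod A ([1, 2] @ js @ [n - 1, n])) = r"
  shows "mprod A 1 n \<parallel> list_prod A ([1, 2] @ js @ [n - 1, n])"
proof -
  let ?P = "A 1 ** A 2" and ?Q = "A (n - 1) ** A n"
  have P: "rank ?P = r" using rank_pair[of 1] assms(1) by (simp add: numeral_2_eq_2)
  have Q: "rank ?Q = r" using rank_pair[of "n - 1"] assms(1) by simp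
  have word: "list_prod A ([1, 2] @ js @ [n - 1, n]) = ?P ** (list_prod A js ** ?Q)"
    by (simp add: list_prod_append matrix_mul_assoc)
  then have "mat_im (list_prod A ([1, 2] @ js @ [n - 1, n])) = mat_im ?P"
    using rank_word P by (simp add: mat_im_matrix_mul_eq)
  moreover have "list_prod A ([1, 2] @ js @ [n - 1, n]) = (?P ** list_prod A js) ** ?Q"
    unfolding word by (simp only: matrix_mul_assoc)
  then have "mat_ker (list_prod A ([1, 2] @ js @ [n - 1, n])) = mat_ker ?Q"
    using rank_word Q by (simp add: mat_ker_matrix_mul_eq)
  moreover have "mat_im (mprod A 1 n) = mat_im ?P" "mat_ker (mprod A 1 n) = mat_ker ?Q"
    using mat_im_mprod[of 1 n] mat_ker_mprod[of 1 n] assms(1) by (simp_all add: numeral_2_eq_2)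
  ultimately show ?thesis unfolding par_def by simp
qed

lemma parallel_short_subproduct_exists:
  assumes "n \<ge> 1"
  shows "\<exists>is. sorted_wrt (<) is \<and> is \<noteq> [] \<and> hd is = 1 \<and> last is = n
    \<and> mprod A 1 n \<parallel> list_prod A is \<and> length is \<le> (CARD('n) choose r) + 3"
proof (cases "n \<le> 3")
  case True
  show ?thesis
  proof (intro exI conjI)
    show "sorted_wrt (<) [1..<Suc n]" by (rule sorted_wrt_upt)
    show "[1..<Suc n] \<noteq> []" "last [1..<Suc n] = n" using assms by simp_all
    show "hd [1..<Suc n] = 1" using assms by (simp add: upt_conv_Cons del: upt_Suc)
    show "mprod A 1 n \<parallel> list_prod A [1..<Suc n]" by (simp add: par_def mprod_def)
    show "length [1..<Suc n] \<le> (CARD('n) choose r) + 3" using True by simp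
  qed
next
  case False
  let ?P = "A 1 ** A 2" and ?Q = "A (n - 1) ** A n"
  define admissible where "admissible js \<longleftrightarrow> sorted_wrt (<) js \<and> set js \<subseteq> {3..n - 2} \<and>
    rank (list_prod A ([1, 2] @ js @ [n - 1, n])) = r" for js
  have word: "list_prod A ([1, 2] @ js @ [n - 1, n]) = ?P ** list_prod A js ** ?Q" for js
    by (simp add: list_prod_append matrix_mul_assoc)
  have "admissible [3..<n - 1]"
    using rank_prod upt_Suc_eq_ends[of n] False unfolding admissible_def mprod_def
    by (auto simp: sorted_wrt_upt)
  then obtain js where js: "admissible js"
    and shortest: "\<And>js'. admissible js' \<Longrightarrow> length js \<le> length js'"
    using ex_has_least_nat[of admissible "[3..<n - 1]" length] by blast
  have "length js < CARD('n) choose r"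
  proof (rule length_shortest_rank_preserving_word_lt)
    show "rank ?P = r" using rank_pair[of 1] False by (simp add: numeral_2_eq_2)
    show "rank ?Q = r" using rank_pair[of "n - 1"] False by simp
    show "rank (?P ** list_prod A js ** ?Q) = r" using js word unfolding admissible_def by simp
    fix a b assume ab: "a < b" "b \<le> length js"
    have "sorted_wrt (<) (take a js @ drop b js)"
      using js ab unfolding admissible_def by (intro sorted_wrt_take_append_drop) auto
    moreover have "set (take a js @ drop b js) \<subseteq> {3..n - 2}"
      using js unfolding admissible_def by (auto dest: in_set_takeD in_set_dropD)
    moreover have "\<not> length js \<le> length (take a js @ drop b js)" using ab by simp
    ultimately show "rank (?P ** list_prod A (take a js @ drop b js) ** ?Q) \<noteq> r"
      using shortest word unfolding admissible_def by metis
  qed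
  moreover have "sorted_wrt (<) ([1, 2] @ js @ [n - 1, n])"
  proof -
    have bounds: "3 \<le> x \<and> x < n - 1" if "x \<in> set js" for x
      using js that False unfolding admissible_def by force
    show ?thesis using js False unfolding admissible_def
      by (auto simp: sorted_wrt_append dest!: bounds)
  qed
  moreover have "mprod A 1 n \<parallel> list_prod A ([1, 2] @ js @ [n - 1, n])"
    using js False parallel_bracketed_product unfolding admissible_def by simp
  ultimately show ?thesis by (intro exI[of _ "[1, 2] @ js @ [n - 1, n]"]) simp
qed

end

theorem lemmaV10:
  fixes K :: "complex set" and A :: "nat \<Rightarrow> complex^'d^'d" and n r :: nat
  assumes "number_field K"
    and "n \<ge> 1"
    and "\<forall>i\<in>{1..n}. mat_over K (A i)"
    and "rank (mprod A 1 n) = r"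
    and "\<forall>i\<in>{1..n-1}. rank (A i ** A (i + 1)) = r"
  shows "(\<exists>is. sorted_wrt (<) is \<and> is \<noteq> [] \<and> hd is = 1 \<and> last is = n
              \<and> mprod A 1 n \<parallel> list_prod A is
              \<and> length is \<le> (CARD('d) choose r) + 3)
       \<and> (n \<ge> 2 * (CARD('d) choose r) + 4 \<longrightarrow>
            (\<exists>k l. 1 \<le> k \<and> k < l \<and> l \<le> n
               \<and> completely_pseudo_regular K (mprod A k l)
               \<and> rank (mprod A k l) = r))"
proof (intro conjI impI)
  show "\<exists>is. sorted_wrt (<) is \<and> is \<noteq> [] \<and> hd is = 1 \<and> last is = n
      \<and> mprod A 1 n \<parallel> list_prod A is \<and> length is \<le> (CARD('d) choose r) + 3"
    using parallel_short_subproduct_exists[OF assms(4,5,2)] .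
  assume "n \<ge> 2 * (CARD('d) choose r) + 4"
  then obtain k l where kl: "1 \<le> k" "k < l" "l \<le> n"
    and index: "mat_im (mprod A k l) \<inter> mat_ker (mprod A k l) = {0}"
    using index_one_subproduct_exists[OF assms(4,5)] by blast
  have K: "is_subfield K" using assms(1) by (rule number_field_imp_is_subfield)
  have "mat_over K (mprod A k l)"
    unfolding mprod_def using assms(3) kl by (intro mat_over_list_prod[OF K]) auto
  then have "completely_pseudo_regular K (mprod A k l)"
    using K index by (intro completely_pseudo_regular_if_index_one)
  then show "\<exists>k l. 1 \<le> k \<and> k < l \<and> l \<le> n \<and> completely_pseudo_regular K (mprod A k l)
      \<and> rank (mprod A k l) = r"
    using kl rank_mprod[OF assms(4,5) kl] by blast
qed

end
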